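(* There exists $\delta>0$ such that the family of NSG-compositions $x_1+\cdots+x_{m-1}$ with maximum $4$ whose last maximal part $x_l=4$ (i.e. $x_l=4$ and $x_i\le3$ for $i>l$) satisfies $m-1-l\le\delta(m-1)$ has growth-rate strictly smaller than $\omega=\frac{1+\sqrt5}2$.
   Context: An NSG-composition is a composition $x_1+\cdots+x_{m-1}$ of positive integers satisfying $x_{s+t}\le x_s+x_t$ and $x_{m-s-t}\le x_{m-s}+x_{m-t}+1$ for all $s,t\ge1$, $s+t<m$ (equivalently, the Kunz vector of a numerical semigroup of multiplicity $m$); its genus is $\sum x_j$. The growth-rate of a family is $\limsup_{g\to\infty}a_g^{1/g}$ with $a_g$ the number of members of genus $g$. *)

theory Defs
  imports Complex_Main "HOL-Library.Liminf_Limsup" "HOL-Library.Extended_Real"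
begin

text \<open>A composition x_1+...+x_{m-1} is represented by the list xs of its parts,
  so m = length xs + 1 and x_j = xs ! (j - 1) for 1 <= j <= m-1.\<close>

definition nsg_comp :: "nat list \<Rightarrow> bool" where
  "nsg_comp xs \<longleftrightarrow>
     (\<forall>v\<in>set xs. 0 < v) \<and>
     (let m = length xs + 1; x = (\<lambda>j. xs ! (j - 1)) in
        \<forall>s t. 1 \<le> s \<and> 1 \<le> t \<and> s + t < m \<longrightarrow>
          x (s + t) \<le> x s + x t \<and> x (m - s - t) \<le> x (m - s) + x (m - t) + 1)"

definition genus :: "nat list \<Rightarrow> nat" where
  "genus xs = sum_list xs"

definition count_genus :: "nat list set \<Rightarrow> nat \<Rightarrow> nat" where
  "count_genus F g = card {xs \<in> F. genus xs = g}"

definition growth_rate :: "nat list set \<Rightarrow> ereal" where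
  "growth_rate F = limsup (\<lambda>g. ereal (root g (real (count_genus F g))))"

definition fam_max4 :: "real \<Rightarrow> nat list set" where
  "fam_max4 \<delta> = {xs. nsg_comp xs \<and> (\<forall>v\<in>set xs. v \<le> 4) \<and>
     (\<exists>l. 1 \<le> l \<and> l \<le> length xs \<and> xs ! (l - 1) = 4 \<and>
          (\<forall>i. l < i \<and> i \<le> length xs \<longrightarrow> xs ! (i - 1) \<le> 3) \<and>
          real (length xs - l) \<le> \<delta> * real (length xs))}"

end

theory Submission
  imports Defs "HOL-Real_Asymp.Real_Asymp"
begin

text \<open>
  Subadditivity gives \<open>x\<^sub>i + x\<^sub>l\<^sub>-\<^sub>i \<ge> 4\<close>, so
  the first \<open>l\<close> parts are encoded by a word over the thirteen pairs \<open>(a, b) \<in> {1..4}\<^sup>2\<close>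
  with \<open>a + b \<ge> 4\<close>. If \<open>d\<close> is the least index with \<open>x\<^sub>d = 1\<close>, subadditivity also forces
  \<open>x\<^sub>i\<^sub>+\<^sub>d \<le> x\<^sub>i + 1\<close> and \<open>x\<^sub>l\<^sub>-\<^sub>i \<le> x\<^sub>l\<^sub>-\<^sub>i\<^sub>-\<^sub>d + 1\<close>, which links letters at distance \<open>d\<close>.
  Weighting a pair by \<open>(5/8)\<^sup>a\<^sup>+\<^sup>b\<close> and multiplying by a potential of the last \<open>d\<close> letters,
  appending a letter never increases the total weight, so for each \<open>d\<close> the admissible words
  of a given length have total weight at most 1. Hence there are \<open>O(g (8/5)\<^sup>g)\<close> choices for
  the first \<open>l\<close> parts of a composition of genus \<open>g\<close>, while the at most \<open>\<delta> g\<close> parts after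
  \<open>x\<^sub>l\<close> lie in \<open>{1,2,3}\<close>. The growth rate is thus at most \<open>3\<^sup>\<delta> \<cdot> 8/5\<close>, which is
  below the golden ratio for \<open>\<delta> = 1/200\<close>.
\<close>

section \<open>Weighted words over the pair alphabet\<close>

text \<open>The possible values of \<open>(x\<^sub>i, x\<^sub>l\<^sub>-\<^sub>i)\<close> when \<open>4 = x\<^sub>l \<le> x\<^sub>i + x\<^sub>l\<^sub>-\<^sub>i\<close>.\<close>

definition pair_alphabet :: "(nat \<times> nat) set" where
  "pair_alphabet = {(a, b). 1 \<le> a \<and> a \<le> 4 \<and> 1 \<le> b \<and> b \<le> 4 \<and> 4 \<le> a + b}"

lemma pair_alphabet_eq:
  "pair_alphabet = {(1,3),(1,4),(2,2),(2,3),(2,4),(3,1),(3,2),(3,3),(3,4),(4,1),(4,2),(4,3),(4,4)}"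
proof (intro set_eqI iffI)
  fix p assume "p \<in> pair_alphabet"
  then obtain a b where p: "p = (a, b)" "a \<in> {1..4}" "b \<in> {1..4}" "4 \<le> a + b"
    unfolding pair_alphabet_def by auto
  have "a \<in> {1,2,3,4}" "b \<in> {1,2,3,4}"
    using p(2,3) by auto
  then show "p \<in> {(1,3),(1,4),(2,2),(2,3),(2,4),(3,1),(3,2),(3,3),(3,4),(4,1),(4,2),(4,3),(4,4)}"
    using p(1,4) by (elim insertE emptyE) simp_all
qed (auto simp: pair_alphabet_def)

lemma finite_pair_alphabet: "finite pair_alphabet"
  unfolding pair_alphabet_eq by simp

definition pair_wt :: "nat \<times> nat \<Rightarrow> real" where
  "pair_wt p = (5/8) ^ (fst p + snd p)"

definition pair_pot :: "nat \<times> nat \<Rightarrow> real" where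
  "pair_pot p = (if 3 \<le> fst p \<and> snd p \<le> 2 then 5/4 else 1)"

definition pair_step :: "nat \<times> nat \<Rightarrow> nat \<times> nat \<Rightarrow> bool" where
  "pair_step q p \<longleftrightarrow> fst p \<le> fst q + 1 \<and> snd q \<le> snd p + 1"

lemma pair_pot_ge_1: "1 \<le> pair_pot p"
  unfolding pair_pot_def by simp

lemma pair_step_sum_le:
  "q \<in> pair_alphabet \<Longrightarrow>
     (\<Sum>p\<in>{p \<in> pair_alphabet. pair_step q p}. pair_wt p * pair_pot p) \<le> pair_pot q"
  unfolding sum.inter_filter[OF finite_pair_alphabet] unfolding pair_alphabet_eq
  by (auto simp: pair_step_def pair_wt_def pair_pot_def power_divide)

lemma pair_fst_ge_2_sum_le:
  "(\<Sum>p\<in>{p \<in> pair_alphabet. 2 \<le> fst p}. pair_wt p * pair_pot p) \<le> 1"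
  unfolding sum.inter_filter[OF finite_pair_alphabet] unfolding pair_alphabet_eq
  by (simp add: pair_wt_def pair_pot_def power_divide)

lemma pair_fst_eq_1_sum_le:
  "(\<Sum>p\<in>{p \<in> pair_alphabet. fst p = 1}. pair_wt p * pair_pot p) \<le> 1"
  unfolding sum.inter_filter[OF finite_pair_alphabet] unfolding pair_alphabet_eq
  by (simp add: pair_wt_def pair_pot_def power_divide)

text \<open>
  \<open>d\<close> is the position of the first pair whose first part is 1 (or exceeds the length
  when there is none); \<open>pair_step\<close> between letters at distance \<open>d\<close> comes from
  \<open>x\<^sub>i\<^sub>+\<^sub>d \<le> x\<^sub>i + x\<^sub>d\<close> and \<open>x\<^sub>l\<^sub>-\<^sub>i \<le> x\<^sub>l\<^sub>-\<^sub>i\<^sub>-\<^sub>d + x\<^sub>d\<close>.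
\<close>

definition admissible :: "nat \<Rightarrow> (nat \<times> nat) list \<Rightarrow> bool" where
  "admissible d ps \<longleftrightarrow> set ps \<subseteq> pair_alphabet \<and>
     (\<forall>i<length ps. Suc i < d \<longrightarrow> 2 \<le> fst (ps ! i)) \<and>
     (\<forall>i<length ps. Suc i = d \<longrightarrow> fst (ps ! i) = 1) \<and>
     (\<forall>i. i + d < length ps \<longrightarrow> pair_step (ps ! i) (ps ! (i + d)))"

lemma admissible_snoc:
  assumes "1 \<le> d"
  shows "admissible d (ps @ [p]) \<longleftrightarrow> admissible d ps \<and> p \<in> pair_alphabet \<and>
    (Suc (length ps) < d \<longrightarrow> 2 \<le> fst p) \<and> (Suc (length ps) = d \<longrightarrow> fst p = 1) \<and>
    (d \<le> length ps \<longrightarrow> pair_step (ps ! (length ps - d)) p)"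
proof -
  let ?L = "length ps"
  have steps: "(\<forall>i. i + d < Suc ?L \<longrightarrow> pair_step ((ps @ [p]) ! i) ((ps @ [p]) ! (i + d))) \<longleftrightarrow>
      (\<forall>i. i + d < ?L \<longrightarrow> pair_step (ps ! i) (ps ! (i + d))) \<and>
      (d \<le> ?L \<longrightarrow> pair_step (ps ! (?L - d)) p)"
  proof -
    have "i + d < Suc ?L \<longleftrightarrow> i + d < ?L \<or> (d \<le> ?L \<and> i = ?L - d)" for i
      by auto
    then show ?thesis
      using assms by (auto simp: nth_append)
  qed
  show ?thesis
    unfolding admissible_def length_append_singleton steps
    by (simp add: All_less_Suc nth_append conj_ac)
qed

definition seq_wt :: "(nat \<times> nat) list \<Rightarrow> real" where
  "seq_wt ps = (\<Prod>p\<leftarrow>ps. pair_wt p)"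

definition seq_pot :: "nat \<Rightarrow> (nat \<times> nat) list \<Rightarrow> real" where
  "seq_pot d ps = (\<Prod>p\<leftarrow>drop (length ps - d) ps. pair_pot p)"

definition adm_seqs :: "nat \<Rightarrow> nat \<Rightarrow> (nat \<times> nat) list set" where
  "adm_seqs d L = {ps. length ps = L \<and> admissible d ps}"

lemma seq_wt_nonneg: "0 \<le> seq_wt ps"
  unfolding seq_wt_def pair_wt_def by (induction ps) auto

lemma seq_wt_snoc: "seq_wt (ps @ [p]) = seq_wt ps * pair_wt p"
  unfolding seq_wt_def by simp

lemma seq_wt_eq_power: "seq_wt ps = (5/8) ^ (\<Sum>p\<leftarrow>ps. fst p + snd p)"
  unfolding seq_wt_def pair_wt_def by (induction ps) (simp_all add: power_add)

lemma prod_list_pair_pot_ge_1: "1 \<le> (\<Prod>p\<leftarrow>qs. pair_pot p)"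
proof (induction qs)
  case (Cons q qs)
  then show ?case
    using mult_mono[OF pair_pot_ge_1[of q] Cons.IH] pair_pot_ge_1[of q] by simp
qed simp

lemma seq_pot_ge_1: "1 \<le> seq_pot d ps"
  unfolding seq_pot_def by (rule prod_list_pair_pot_ge_1)

lemma finite_adm_seqs: "finite (adm_seqs d L)"
  by (rule finite_subset[OF _ finite_lists_length_eq[OF finite_pair_alphabet, of L]])
    (auto simp: adm_seqs_def admissible_def)

lemma adm_seqs_Suc:
  assumes "1 \<le> d"
  shows "adm_seqs d (Suc L) =
    (\<lambda>(ps, p). ps @ [p]) ` (SIGMA ps:adm_seqs d L. {p \<in> pair_alphabet. admissible d (ps @ [p])})"
    (is "_ = ?snoc ` ?S")
proof (intro set_eqI iffI)
  fix qs assume "qs \<in> adm_seqs d (Suc L)"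
  then have qs: "length qs = Suc L" "admissible d qs"
    unfolding adm_seqs_def by auto
  then have split: "qs = butlast qs @ [last qs]"
    by (metis append_butlast_last_id list.size(3) nat.distinct(1))
  then have "(butlast qs, last qs) \<in> ?S"
    using qs admissible_snoc[OF assms, of "butlast qs" "last qs"] by (auto simp: adm_seqs_def)
  with split show "qs \<in> ?snoc ` ?S"
    by force
qed (auto simp: adm_seqs_def)

lemma admissible_snoc_sum_le:
  assumes ps: "admissible d ps" and d: "1 \<le> d"
  shows "(\<Sum>p\<in>{p \<in> pair_alphabet. admissible d (ps @ [p])}. seq_wt (ps @ [p]) * seq_pot d (ps @ [p]))
    \<le> seq_wt ps * seq_pot d ps"
proof (cases "d \<le> length ps")
  case True
  define q where "q = ps ! (length ps - d)"
  define R where "R = (\<Prod>p\<leftarrow>drop (Suc (length ps - d)) ps. pair_pot p)"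
  have q: "q \<in> pair_alphabet"
    using ps True d unfolding admissible_def q_def by (auto intro: nth_mem)
  have "length ps - d < length ps"
    using True d by simp
  \<comment> \<open>the window of the potential loses the letter \<open>q\<close> that constrains \<open>p\<close> and gains \<open>p\<close>\<close>
  then have pot: "seq_pot d ps = pair_pot q * R"
    unfolding seq_pot_def R_def q_def by (simp add: Cons_nth_drop_Suc[symmetric])
  have pot_snoc: "seq_pot d (ps @ [p]) = R * pair_pot p" for p
    using True d unfolding seq_pot_def R_def by (simp add: Suc_diff_le)
  have "{p \<in> pair_alphabet. admissible d (ps @ [p])} = {p \<in> pair_alphabet. pair_step q p}"
    using admissible_snoc[OF d] ps True unfolding q_def by auto
  then have "(\<Sum>p\<in>{p \<in> pair_alphabet. admissible d (ps @ [p])}. seq_wt (ps @ [p]) * seq_pot d (ps @ [p]))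
      = seq_wt ps * R * (\<Sum>p\<in>{p \<in> pair_alphabet. pair_step q p}. pair_wt p * pair_pot p)"
    by (simp add: sum_distrib_left seq_wt_snoc pot_snoc mult_ac)
  also have "\<dots> \<le> seq_wt ps * R * pair_pot q"
    using seq_wt_nonneg[of ps] prod_list_pair_pot_ge_1 pair_step_sum_le[OF q]
    unfolding R_def by (intro mult_left_mono mult_nonneg_nonneg) (auto intro: order_trans[OF zero_le_one])
  finally show ?thesis
    by (simp add: pot mult_ac)
next
  case False
  define first where "first = (\<lambda>p::nat \<times> nat. if Suc (length ps) < d then 2 \<le> fst p else fst p = 1)"
  have pot_snoc: "seq_pot d (ps @ [p]) = seq_pot d ps * pair_pot p" for p
    using False unfolding seq_pot_def by simp
  have "{p \<in> pair_alphabet. admissible d (ps @ [p])} = {p \<in> pair_alphabet. first p}"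
    using admissible_snoc[OF d] ps False unfolding first_def by auto
  then have "(\<Sum>p\<in>{p \<in> pair_alphabet. admissible d (ps @ [p])}. seq_wt (ps @ [p]) * seq_pot d (ps @ [p]))
      = seq_wt ps * seq_pot d ps * (\<Sum>p\<in>{p \<in> pair_alphabet. first p}. pair_wt p * pair_pot p)"
    by (simp add: sum_distrib_left seq_wt_snoc pot_snoc mult_ac)
  also have "\<dots> \<le> seq_wt ps * seq_pot d ps * 1"
  proof (intro mult_left_mono)
    show "(\<Sum>p\<in>{p \<in> pair_alphabet. first p}. pair_wt p * pair_pot p) \<le> 1"
      using pair_fst_ge_2_sum_le pair_fst_eq_1_sum_le
      unfolding first_def by (cases "Suc (length ps) < d") simp_all
  qed (use seq_wt_nonneg[of ps] seq_pot_ge_1[of d ps] in simp)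
  finally show ?thesis
    by simp
qed

lemma adm_seqs_wt_pot_sum_le_1:
  assumes "1 \<le> d"
  shows "(\<Sum>ps\<in>adm_seqs d L. seq_wt ps * seq_pot d ps) \<le> 1"
proof (induction L)
  case 0
  have "adm_seqs d 0 = {[]}"
    unfolding adm_seqs_def admissible_def by auto
  then show ?case
    by (simp add: seq_wt_def seq_pot_def)
next
  case (Suc L)
  let ?ext = "\<lambda>ps. {p \<in> pair_alphabet. admissible d (ps @ [p])}"
  have inj: "inj_on (\<lambda>(ps, p). ps @ [p]) (SIGMA ps:adm_seqs d L. ?ext ps)"
    by (auto simp: inj_on_def)
  have "(\<Sum>ps\<in>adm_seqs d (Suc L). seq_wt ps * seq_pot d ps)
      = (\<Sum>ps\<in>adm_seqs d L. \<Sum>p\<in>?ext ps. seq_wt (ps @ [p]) * seq_pot d (ps @ [p]))"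
    unfolding adm_seqs_Suc[OF assms] sum.reindex[OF inj]
    by (simp add: sum.Sigma finite_adm_seqs finite_pair_alphabet case_prod_beta)
  also have "\<dots> \<le> (\<Sum>ps\<in>adm_seqs d L. seq_wt ps * seq_pot d ps)"
    using admissible_snoc_sum_le assms by (intro sum_mono) (auto simp: adm_seqs_def)
  finally show ?case
    using Suc.IH by simp
qed

lemma adm_seqs_wt_sum_le_1:
  assumes "1 \<le> d"
  shows "(\<Sum>ps\<in>adm_seqs d L. seq_wt ps) \<le> 1"
proof -
  have "(\<Sum>ps\<in>adm_seqs d L. seq_wt ps) \<le> (\<Sum>ps\<in>adm_seqs d L. seq_wt ps * seq_pot d ps)"
    using seq_wt_nonneg seq_pot_ge_1
    by (intro sum_mono) (metis mult.right_neutral mult_left_mono)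
  also have "\<dots> \<le> 1"
    by (rule adm_seqs_wt_pot_sum_le_1[OF assms])
  finally show ?thesis .
qed

section \<open>Mirrored pairs of a composition\<close>

lemma nsg_comp_pos: "nsg_comp xs \<Longrightarrow> v \<in> set xs \<Longrightarrow> 0 < v"
  unfolding nsg_comp_def by auto

lemma nsg_comp_subadditive:
  assumes "nsg_comp xs" "i + j + 2 \<le> length xs"
  shows "xs ! (i + j + 1) \<le> xs ! i + xs ! j"
proof -
  have "\<forall>s t. 1 \<le> s \<and> 1 \<le> t \<and> s + t < length xs + 1 \<longrightarrow>
      xs ! (s + t - 1) \<le> xs ! (s - 1) + xs ! (t - 1)"
    using assms(1) unfolding nsg_comp_def Let_def by blast
  from this[rule_format, of "Suc i" "Suc j"] assms(2) show ?thesis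
    by simp
qed

text \<open>
  With 0-based list indices, pair \<open>i\<close> is \<open>(x\<^sub>i\<^sub>+\<^sub>1, x\<^sub>l\<^sub>-\<^sub>1\<^sub>-\<^sub>i)\<close> in the paper's notation; for even
  \<open>l\<close> the middle part \<open>x\<^sub>l\<^sub>/\<^sub>2\<close> occurs in both coordinates of the last pair.
\<close>

definition mirror_pairs :: "nat list \<Rightarrow> nat \<Rightarrow> (nat \<times> nat) list" where
  "mirror_pairs xs l = map (\<lambda>i. (xs ! i, xs ! (l - 2 - i))) [0..<l div 2]"

lemma length_mirror_pairs [simp]: "length (mirror_pairs xs l) = l div 2"
  unfolding mirror_pairs_def by simp

lemma nth_mirror_pairs [simp]: "i < l div 2 \<Longrightarrow> mirror_pairs xs l ! i = (xs ! i, xs ! (l - 2 - i))"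
  unfolding mirror_pairs_def by simp

lemma mirror_pairs_in_adm_seqs:
  assumes nsg: "nsg_comp xs" and le4: "\<forall>v\<in>set xs. v \<le> 4"
    and l: "l \<le> length xs" and x4: "xs ! (l - 1) = 4" and d: "1 \<le> d"
    and before_d: "\<forall>i<l div 2. Suc i < d \<longrightarrow> xs ! i \<noteq> 1"
    and at_d: "d \<le> l div 2 \<longrightarrow> xs ! (d - 1) = 1"
  shows "mirror_pairs xs l \<in> adm_seqs d (l div 2)"
proof -
  let ?ps = "mirror_pairs xs l"
  have range: "1 \<le> xs ! k \<and> xs ! k \<le> 4" if "k < length xs" for k
    using nsg_comp_pos[OF nsg] le4 that by (simp add: Suc_le_eq)
  have "?ps ! i \<in> pair_alphabet" if i: "i < l div 2" for i
  proof -
    have "xs ! (i + (l - 2 - i) + 1) \<le> xs ! i + xs ! (l - 2 - i)"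
      using i l by (intro nsg_comp_subadditive[OF nsg]) linarith
    moreover have "i + (l - 2 - i) + 1 = l - 1"
      using i by linarith
    ultimately show ?thesis
      using i l x4 range[of i] range[of "l - 2 - i"] by (simp add: pair_alphabet_def)
  qed
  then have alphabet: "set ?ps \<subseteq> pair_alphabet"
    by (auto simp: in_set_conv_nth)
  have steps: "pair_step (?ps ! i) (?ps ! (i + d))" if i: "i + d < l div 2" for i
  proof -
    have one: "xs ! (d - 1) = 1"
      using at_d i by simp
    have "xs ! (i + (d - 1) + 1) \<le> xs ! i + xs ! (d - 1)"
      using i l by (intro nsg_comp_subadditive[OF nsg]) linarith
    moreover have "xs ! (l - 2 - (i + d) + (d - 1) + 1) \<le> xs ! (l - 2 - (i + d)) + xs ! (d - 1)"
      using i l d by (intro nsg_comp_subadditive[OF nsg]) linarith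
    moreover have "i + (d - 1) + 1 = i + d" "l - 2 - (i + d) + (d - 1) + 1 = l - 2 - i"
      using i d by linarith+
    ultimately show ?thesis
      using i one by (simp add: pair_step_def)
  qed
  have "2 \<le> xs ! i" if "i < l div 2" "Suc i < d" for i
    using before_d range[of i] that l by fastforce
  then show ?thesis
    using alphabet steps at_d unfolding adm_seqs_def admissible_def
    by (auto simp: Suc_le_eq)
qed

lemma mirror_pairs_admissible:
  assumes nsg: "nsg_comp xs" and le4: "\<forall>v\<in>set xs. v \<le> 4"
    and l: "l \<le> length xs" and x4: "xs ! (l - 1) = 4"
  shows "mirror_pairs xs l \<in> (\<Union>d\<in>{1..Suc (l div 2)}. adm_seqs d (l div 2))"
proof (cases "\<exists>k<l div 2. xs ! k = 1")
  case True
  define k where "k = (LEAST k. k < l div 2 \<and> xs ! k = 1)"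
  have k: "k < l div 2" "xs ! k = 1"
    using LeastI_ex[OF True] unfolding k_def by auto
  have "\<forall>i<l div 2. Suc i < Suc k \<longrightarrow> xs ! i \<noteq> 1"
    using not_less_Least unfolding k_def by fastforce
  then have "mirror_pairs xs l \<in> adm_seqs (Suc k) (l div 2)"
    using k by (intro mirror_pairs_in_adm_seqs[OF nsg le4 l x4]) auto
  then show ?thesis
    using k by auto
next
  case False
  then have "mirror_pairs xs l \<in> adm_seqs (Suc (l div 2)) (l div 2)"
    by (intro mirror_pairs_in_adm_seqs[OF nsg le4 l x4]) auto
  then show ?thesis
    by auto
qed

lemma mirror_pairs_size_le:
  assumes l: "1 \<le> l" "l \<le> length xs" and le4: "\<forall>v\<in>set xs. v \<le> 4"
  shows "(\<Sum>p\<leftarrow>mirror_pairs xs l. fst p + snd p) \<le> sum_list xs + 4"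
proof -
  let ?L = "l div 2"
  define A where "A = {..<?L}"
  define B where "B = (\<lambda>i. l - 2 - i) ` A"
  have "(\<Sum>p\<leftarrow>mirror_pairs xs l. fst p + snd p) = (\<Sum>i\<in>A. xs ! i) + (\<Sum>i\<in>A. xs ! (l - 2 - i))"
    unfolding mirror_pairs_def A_def
    by (simp add: sum_list_sum_nth sum.distrib atLeast0LessThan)
  also have "(\<Sum>i\<in>A. xs ! (l - 2 - i)) = (\<Sum>j\<in>B. xs ! j)"
  proof -
    have "inj_on (\<lambda>i. l - 2 - i) A"
      by (auto simp: A_def inj_on_def)
    then show ?thesis
      unfolding B_def by (simp add: sum.reindex)
  qed
  also have "(\<Sum>i\<in>A. xs ! i) + (\<Sum>j\<in>B. xs ! j) = (\<Sum>j\<in>A \<union> B. xs ! j) + (\<Sum>j\<in>A \<inter> B. xs ! j)"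
    by (rule sum.union_inter[symmetric]) (auto simp: A_def B_def)
  also have "(\<Sum>j\<in>A \<union> B. xs ! j) \<le> (\<Sum>j<length xs. xs ! j)"
    using l by (intro sum_mono2) (auto simp: A_def B_def)
  also have "(\<Sum>j\<in>A \<inter> B. xs ! j) \<le> (\<Sum>j\<in>{?L - 1}. xs ! j)"
    \<comment> \<open>the two halves can only share the middle index\<close>
    by (intro sum_mono2) (auto simp: A_def B_def)
  also have "(\<Sum>j\<in>{?L - 1}. xs ! j) \<le> 4"
    using l le4 by (simp add: nth_mem)
  finally show ?thesis
    by (simp add: sum_list_sum_nth atLeast0LessThan)
qed

lemma inj_on_mirror_pairs_drop:
  "inj_on (\<lambda>xs. (mirror_pairs xs l, drop l xs)) {xs. length xs = n \<and> xs ! (l - 1) = 4}"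
proof (rule inj_onI)
  fix xs ys
  assume xs: "xs \<in> {xs. length xs = n \<and> xs ! (l - 1) = 4}"
    and ys: "ys \<in> {xs. length xs = n \<and> xs ! (l - 1) = 4}"
    and eq: "(mirror_pairs xs l, drop l xs) = (mirror_pairs ys l, drop l ys)"
  have pairs: "xs ! i = ys ! i \<and> xs ! (l - 2 - i) = ys ! (l - 2 - i)" if "i < l div 2" for i
    using arg_cong[OF eq, of "\<lambda>y. fst y ! i"] that by simp
  show "xs = ys"
  proof (rule nth_equalityI)
    show "length xs = length ys"
      using xs ys by simp
  next
    fix j assume j: "j < length xs"
    consider "j < l div 2" | "l - 2 - j < l div 2" "j < l - 1" | "j = l - 1" | "l \<le> j"
      by linarith
    then show "xs ! j = ys ! j"
    proof cases
      case 2
      then have "l - 2 - (l - 2 - j) = j"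
        by linarith
      then show ?thesis
        using pairs[OF 2(1)] by simp
    next
      case 4
      then show ?thesis
        using arg_cong[OF eq, of "\<lambda>y. snd y ! (j - l)"] j xs ys by simp
    qed (use pairs xs ys in auto)
  qed
qed

section \<open>Counting and growth\<close>

lemma adm_seqs_Union_wt_sum_le:
  "(\<Sum>ps\<in>(\<Union>d\<in>{1..D}. adm_seqs d L). seq_wt ps) \<le> D"
proof -
  have "(\<Sum>ps\<in>(\<Union>d\<in>{1..D}. adm_seqs d L). seq_wt ps)
      = (\<Sum>ps\<in>snd ` (SIGMA d:{1..D}. adm_seqs d L). seq_wt ps)"
    by (simp add: Sigma_def image_UN)
  also have "\<dots> \<le> (\<Sum>x\<in>(SIGMA d:{1..D}. adm_seqs d L). seq_wt (snd x))"
    using sum_image_le[of "SIGMA d:{1..D}. adm_seqs d L" seq_wt snd]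
    by (simp add: finite_adm_seqs seq_wt_nonneg comp_def)
  also have "\<dots> = (\<Sum>d\<in>{1..D}. \<Sum>ps\<in>adm_seqs d L. seq_wt ps)"
    by (simp add: sum.Sigma finite_adm_seqs case_prod_beta)
  also have "\<dots> \<le> (\<Sum>d\<in>{1..D}. 1)"
    by (intro sum_mono adm_seqs_wt_sum_le_1) simp
  finally show ?thesis
    by simp
qed

definition comps_last4 :: "nat \<Rightarrow> nat \<Rightarrow> nat \<Rightarrow> nat list set" where
  "comps_last4 n l g = {xs. length xs = n \<and> nsg_comp xs \<and> (\<forall>v\<in>set xs. v \<le> 4) \<and>
     xs ! (l - 1) = 4 \<and> (\<forall>v\<in>set (drop l xs). v \<le> 3) \<and> genus xs = g}"

lemma finite_comps_last4: "finite (comps_last4 n l g)"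
  by (rule finite_subset[OF _ finite_lists_length_eq[of "{..4::nat}" n]])
    (auto simp: comps_last4_def)

lemma card_comps_last4_le:
  assumes l: "1 \<le> l" "l \<le> n"
  shows "real (card (comps_last4 n l g)) * (5/8) ^ (g + 4) \<le> real (Suc (l div 2)) * 3 ^ (n - l)"
proof -
  let ?C = "comps_last4 n l g"
  define U where "U = (\<Union>d\<in>{1..Suc (l div 2)}. adm_seqs d (l div 2))"
  define T where "T = {ts. set ts \<subseteq> {1, 2, 3::nat} \<and> length ts = n - l}"
  let ?phi = "\<lambda>xs. (mirror_pairs xs l, drop l xs)"
  have inj: "inj_on ?phi ?C"
    by (rule inj_on_subset[OF inj_on_mirror_pairs_drop[of l n]]) (auto simp: comps_last4_def)
  have image: "?phi ` ?C \<subseteq> U \<times> T"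
  proof clarify
    fix xs assume "xs \<in> ?C"
    then have xs: "length xs = n" "nsg_comp xs" "\<forall>v\<in>set xs. v \<le> 4" "xs ! (l - 1) = 4"
      "\<forall>v\<in>set (drop l xs). v \<le> 3"
      unfolding comps_last4_def by auto
    have "mirror_pairs xs l \<in> U"
      unfolding U_def using mirror_pairs_admissible xs l by simp
    moreover have "v \<in> {1, 2, 3}" if "v \<in> set (drop l xs)" for v
      using that xs(5) nsg_comp_pos[OF xs(2), of v] in_set_dropD[OF that] by auto
    ultimately show "mirror_pairs xs l \<in> U \<and> drop l xs \<in> T"
      unfolding T_def using xs(1) by auto
  qed
  have "real (card ?C) * (5/8) ^ (g + 4) = (\<Sum>xs\<in>?C. (5/8) ^ (g + 4))"
    by simp
  also have "\<dots> \<le> (\<Sum>xs\<in>?C. seq_wt (mirror_pairs xs l))"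
  proof (intro sum_mono)
    fix xs assume "xs \<in> ?C"
    then have "(\<Sum>p\<leftarrow>mirror_pairs xs l. fst p + snd p) \<le> g + 4"
      using mirror_pairs_size_le[of l xs] l unfolding comps_last4_def genus_def by auto
    then show "(5/8) ^ (g + 4) \<le> seq_wt (mirror_pairs xs l)"
      unfolding seq_wt_eq_power by (intro power_decreasing) auto
  qed
  also have "\<dots> = (\<Sum>y\<in>?phi ` ?C. seq_wt (fst y))"
    by (simp add: sum.reindex[OF inj])
  also have "\<dots> \<le> (\<Sum>y\<in>U \<times> T. seq_wt (fst y))"
    using image seq_wt_nonneg
    by (intro sum_mono2) (auto simp: U_def T_def finite_adm_seqs finite_lists_length_eq)
  also have "\<dots> = (\<Sum>ps\<in>U. \<Sum>ts\<in>T. seq_wt ps)"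
    unfolding sum.cartesian_product by (rule sum.cong) auto
  also have "\<dots> = (\<Sum>ps\<in>U. seq_wt ps) * card T"
    by (simp add: sum_distrib_right mult.commute)
  also have "\<dots> \<le> real (Suc (l div 2)) * 3 ^ (n - l)"
  proof -
    have "card T = 3 ^ (n - l)"
      using card_lists_length_eq[of "{1, 2, 3::nat}" "n - l"] unfolding T_def by (simp add: numeral_3_eq_3)
    then show ?thesis
      using adm_seqs_Union_wt_sum_le[where D = "Suc (l div 2)" and L = "l div 2"]
      unfolding U_def by (simp add: mult_right_mono)
  qed
  finally show ?thesis .
qed

lemma card_comps_last4_le_exp:
  assumes \<delta>: "0 \<le> \<delta>" and l: "1 \<le> l" "l \<le> n" and "n \<le> g"
    and tail: "real (n - l) \<le> \<delta> * real n"
  shows "real (card (comps_last4 n l g)) \<le> (real g + 1) * (8/5) ^ 4 * (3 powr \<delta> * (8/5)) ^ g"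
proof -
  have "(3::real) ^ (n - l) = 3 powr real (n - l)"
    by (simp add: powr_realpow)
  also have "\<dots> \<le> 3 powr (\<delta> * real g)"
    using tail mult_left_mono[of n g \<delta>] \<open>n \<le> g\<close> \<delta> by (intro powr_mono) auto
  also have "\<dots> = (3 powr \<delta>) ^ g"
    by (simp add: powr_power mult.commute)
  finally have "real (Suc (l div 2)) * 3 ^ (n - l) \<le> (real g + 1) * (3 powr \<delta>) ^ g"
    using l \<open>n \<le> g\<close> by (intro mult_mono) auto
  then have "real (card (comps_last4 n l g)) * (5/8) ^ (g + 4) \<le> (real g + 1) * (3 powr \<delta>) ^ g"
    using card_comps_last4_le[OF l, of g] by linarith
  then have "real (card (comps_last4 n l g)) \<le> (real g + 1) * (3 powr \<delta>) ^ g * (8/5) ^ (g + 4)"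
    by (simp add: field_simps power_divide)
  then show ?thesis
    by (simp only: power_add power_mult_distrib mult_ac)
qed

lemma length_le_sum_list: "(\<forall>v\<in>set xs. 0 < (v::nat)) \<Longrightarrow> length xs \<le> sum_list xs"
  by (induction xs) (auto simp: Suc_le_eq)

lemma count_genus_fam_max4_le:
  assumes \<delta>: "0 \<le> \<delta>"
  shows "real (count_genus (fam_max4 \<delta>) g) \<le> (8/5) ^ 4 * (real g + 1) ^ 3 * (3 powr \<delta> * (8/5)) ^ g"
proof -
  define B where "B = (real g + 1) * (8/5) ^ 4 * (3 powr \<delta> * (8/5)) ^ g"
  let ?I = "\<lambda>n. {l \<in> {1..n}. real (n - l) \<le> \<delta> * real n}"
  have cover: "{xs \<in> fam_max4 \<delta>. genus xs = g} \<subseteq> (\<Union>n\<in>{..g}. \<Union>l\<in>?I n. comps_last4 n l g)"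
  proof
    fix xs assume "xs \<in> {xs \<in> fam_max4 \<delta>. genus xs = g}"
    then obtain l where xs: "nsg_comp xs" "\<forall>v\<in>set xs. v \<le> 4" "genus xs = g"
      and l: "1 \<le> l" "l \<le> length xs" "xs ! (l - 1) = 4"
        "\<forall>i. l < i \<and> i \<le> length xs \<longrightarrow> xs ! (i - 1) \<le> 3"
        "real (length xs - l) \<le> \<delta> * real (length xs)"
      unfolding fam_max4_def by auto
    have "\<forall>v\<in>set (drop l xs). v \<le> 3"
    proof
      fix v assume "v \<in> set (drop l xs)"
      then obtain k where "k < length xs - l" "v = xs ! (l + k)"
        by (auto simp: in_set_conv_nth)
      then show "v \<le> 3"
        using l(4)[rule_format, of "Suc (l + k)"] by simp
    qed
    moreover have "length xs \<le> g"
      using length_le_sum_list[of xs] nsg_comp_pos[OF xs(1)] xs(3) unfolding genus_def by auto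
    ultimately show "xs \<in> (\<Union>n\<in>{..g}. \<Union>l\<in>?I n. comps_last4 n l g)"
      using xs l unfolding comps_last4_def by auto
  qed
  have "real (count_genus (fam_max4 \<delta>) g) \<le> real (\<Sum>n\<in>{..g}. \<Sum>l\<in>?I n. card (comps_last4 n l g))"
  proof -
    have "count_genus (fam_max4 \<delta>) g \<le> card (\<Union>n\<in>{..g}. \<Union>l\<in>?I n. comps_last4 n l g)"
      unfolding count_genus_def
      using cover by (intro card_mono) (auto simp: finite_comps_last4)
    also have "\<dots> \<le> (\<Sum>n\<in>{..g}. card (\<Union>l\<in>?I n. comps_last4 n l g))"
      by (intro card_UN_le) simp
    also have "\<dots> \<le> (\<Sum>n\<in>{..g}. \<Sum>l\<in>?I n. card (comps_last4 n l g))"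
      by (intro sum_mono card_UN_le) simp
    finally show ?thesis
      by linarith
  qed
  also have "\<dots> \<le> (\<Sum>n\<in>{..g}. \<Sum>l\<in>?I n. B)"
    unfolding of_nat_sum B_def using card_comps_last4_le_exp[OF \<delta>]
    by (intro sum_mono) auto
  also have "\<dots> \<le> (\<Sum>n\<in>{..g}. (real g + 1) * B)"
  proof (intro sum_mono)
    fix n assume "n \<in> {..g}"
    have "card (?I n) \<le> card {1..n}"
      by (intro card_mono) auto
    then have "card (?I n) \<le> g + 1"
      using \<open>n \<in> {..g}\<close> by simp
    then have "real (card (?I n)) \<le> real g + 1"
      by linarith
    moreover have "0 \<le> B"
      unfolding B_def by simp
    ultimately show "(\<Sum>l\<in>?I n. B) \<le> (real g + 1) * B"
      by (simp add: mult_right_mono)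
  qed
  also have "\<dots> = (8/5) ^ 4 * (real g + 1) ^ 3 * (3 powr \<delta> * (8/5)) ^ g"
    unfolding B_def by (simp add: power3_eq_cube)
  finally show ?thesis .
qed

lemma limsup_root_le_of_poly_exp_bound:
  fixes a :: "nat \<Rightarrow> real"
  assumes C: "0 < C" and c: "0 \<le> c" and bound: "\<And>g. a g \<le> C * (real g + 1) ^ k * c ^ g"
  shows "limsup (\<lambda>g. ereal (root g (a g))) \<le> ereal c"
proof -
  define b where "b = (\<lambda>g. root g C * root g (real g + 1) ^ k * c)"
  have root_le: "root g (a g) \<le> b g" if "0 < g" for g
  proof -
    have "root g (a g) \<le> root g (C * (real g + 1) ^ k * c ^ g)"
      using bound that by (rule real_root_le_mono[rotated])
    also have "\<dots> = b g"
      using that c unfolding b_def by (simp add: real_root_mult real_root_power real_root_power_cancel)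
    finally show ?thesis .
  qed
  have "(\<lambda>g::nat. (real g + 1) powr (1 / real g)) \<longlonglongrightarrow> 1"
    by real_asymp
  moreover have "\<forall>\<^sub>F g in sequentially. (real g + 1) powr (1 / real g) = root g (real g + 1)"
    using eventually_gt_at_top[of 0] by eventually_elim (simp add: root_powr_inverse)
  ultimately have "(\<lambda>g. root g (real g + 1)) \<longlonglongrightarrow> 1"
    by (rule Lim_transform_eventually)
  then have "b \<longlonglongrightarrow> 1 * 1 ^ k * c"
    unfolding b_def by (intro tendsto_intros LIMSEQ_root_const C)
  then have "limsup (\<lambda>g. ereal (b g)) = ereal c"
    by (intro lim_imp_Limsup) auto
  moreover have "limsup (\<lambda>g. ereal (root g (a g))) \<le> limsup (\<lambda>g. ereal (b g))"
    using root_le by (intro Limsup_mono) (auto simp: eventually_at_top_linorder intro!: exI[of _ 1])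
  ultimately show ?thesis
    by simp
qed

lemma growth_bound_lt_golden_ratio: "3 powr (1/200) * (8/5) < (1 + sqrt 5) / (2::real)"
proof -
  have "(3::real) \<le> (101/100) ^ 200"
    using Bernoulli_inequality[of "1/100::real" 200] by simp
  then have "(3::real) powr (1/200) \<le> ((101/100) ^ 200) powr (1/200)"
    by (intro powr_mono2) auto
  also have "\<dots> = ((101/100) powr real 200) powr (1/200)"
    by (subst powr_realpow) simp_all
  also have "\<dots> = 101/100"
    unfolding powr_powr by simp
  finally have "(3::real) powr (1/200) * (8/5) \<le> 202/125"
    by simp
  moreover have "(279/125::real) < sqrt 5"
    by (rule real_less_rsqrt) (simp add: power2_eq_square)
  ultimately show ?thesis
    by simp
qed

theorem proposition12p6:
  shows "\<exists>\<delta>::real. \<delta> > 0 \<and> growth_rate (fam_max4 \<delta>) < ereal ((1 + sqrt 5) / 2)"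
proof (intro exI conjI)
  let ?\<delta> = "1/200 :: real"
  show "?\<delta> > 0"
    by simp
  have "growth_rate (fam_max4 ?\<delta>) \<le> ereal (3 powr ?\<delta> * (8/5))"
    unfolding growth_rate_def
    using count_genus_fam_max4_le[of ?\<delta>]
    by (intro limsup_root_le_of_poly_exp_bound[where C = "(8/5) ^ 4" and k = 3]) auto
  also have "\<dots> < ereal ((1 + sqrt 5) / 2)"
    using growth_bound_lt_golden_ratio by simp
  finally show "growth_rate (fam_max4 ?\<delta>) < ereal ((1 + sqrt 5) / 2)" .
qed

end
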